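(* Let $A, C, D$ be binary random variables, with $A$ taking values $a,\overline{a}$, $C$ taking values $c,\overline{c}$, $D$ taking values $d,\overline{d}$, and let $Y$ be a real random variable with finite expectation. Suppose the joint distribution factorizes as \[ p(A,C,D,Y)=p(C)\,p(D\mid C)\,p(A\mid C)\,p(Y\mid A,C). \] Assume that $C$ and $D$ are dependent, and that every event $\{A=x, C=y, D=z\}$ has positive probability. If $E[Y\mid A,D]$ is monotone in $D$, then $RD_{obs}$ lies between $RD_{true}$ and $RD_{crude}$ (i.e. $\min(RD_{true},RD_{crude})\le RD_{obs}\le \max(RD_{true},RD_{crude})$).
   Context: Define $RD_{true}=E[Y|a,c]p(c)+E[Y|a,\overline{c}]p(\overline{c})-E[Y|\overline{a},c]p(c)-E[Y|\overline{a},\overline{c}]p(\overline{c})$ (the average causal effect of $A$ on $Y$), $RD_{crude}=E[Y|a]-E[Y|\overline{a}]$, and $RD_{obs}=E[Y|a,d]p(d)+E[Y|a,\overline{d}]p(\overline{d})-E[Y|\overline{a},d]p(d)-E[Y|\overline{a},\overline{d}]p(\overline{d})$. $E[Y\mid A,D]$ is nondecreasing in $D$ if $E[Y\mid a,d]\ge E[Y\mid a,\overline{d}]$ and $E[Y\mid \overline{a},d]\ge E[Y\mid \overline{a},\overline{d}]$; nonincreasing if both inequalities are reversed; monotone if it is either. *)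

theory Defs
  imports "HOL-Probability.Probability"
begin

text \<open>Binary random variables are modelled as bool-valued functions: True stands for
  the value a (resp. c, d) and False for abar (resp. cbar, dbar).\<close>

definition ev :: "'w measure \<Rightarrow> ('w \<Rightarrow> 'b) \<Rightarrow> 'b \<Rightarrow> 'w set" where
  "ev M X v = {\<omega> \<in> space M. X \<omega> = v}"

definition condE :: "'w measure \<Rightarrow> ('w \<Rightarrow> real) \<Rightarrow> 'w set \<Rightarrow> real" where
  "condE M Y S = (\<integral>\<omega>. indicator S \<omega> * Y \<omega> \<partial>M) / measure M S"

definition RD_true :: "'w measure \<Rightarrow> ('w \<Rightarrow> bool) \<Rightarrow> ('w \<Rightarrow> bool) \<Rightarrow> ('w \<Rightarrow> real) \<Rightarrow> real" where
  "RD_true M A C Y =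
     condE M Y (ev M A True \<inter> ev M C True) * measure M (ev M C True)
   + condE M Y (ev M A True \<inter> ev M C False) * measure M (ev M C False)
   - condE M Y (ev M A False \<inter> ev M C True) * measure M (ev M C True)
   - condE M Y (ev M A False \<inter> ev M C False) * measure M (ev M C False)"

definition RD_crude :: "'w measure \<Rightarrow> ('w \<Rightarrow> bool) \<Rightarrow> ('w \<Rightarrow> real) \<Rightarrow> real" where
  "RD_crude M A Y = condE M Y (ev M A True) - condE M Y (ev M A False)"

definition RD_obs :: "'w measure \<Rightarrow> ('w \<Rightarrow> bool) \<Rightarrow> ('w \<Rightarrow> bool) \<Rightarrow> ('w \<Rightarrow> real) \<Rightarrow> real" where
  "RD_obs M A D Y =
     condE M Y (ev M A True \<inter> ev M D True) * measure M (ev M D True)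
   + condE M Y (ev M A True \<inter> ev M D False) * measure M (ev M D False)
   - condE M Y (ev M A False \<inter> ev M D True) * measure M (ev M D True)
   - condE M Y (ev M A False \<inter> ev M D False) * measure M (ev M D False)"

definition nondecr_in_D :: "'w measure \<Rightarrow> ('w \<Rightarrow> bool) \<Rightarrow> ('w \<Rightarrow> bool) \<Rightarrow> ('w \<Rightarrow> real) \<Rightarrow> bool" where
  "nondecr_in_D M A D Y \<longleftrightarrow>
     condE M Y (ev M A True \<inter> ev M D True) \<ge> condE M Y (ev M A True \<inter> ev M D False) \<and>
     condE M Y (ev M A False \<inter> ev M D True) \<ge> condE M Y (ev M A False \<inter> ev M D False)"

definition nonincr_in_D :: "'w measure \<Rightarrow> ('w \<Rightarrow> bool) \<Rightarrow> ('w \<Rightarrow> bool) \<Rightarrow> ('w \<Rightarrow> real) \<Rightarrow> bool" where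
  "nonincr_in_D M A D Y \<longleftrightarrow>
     condE M Y (ev M A True \<inter> ev M D True) \<le> condE M Y (ev M A True \<inter> ev M D False) \<and>
     condE M Y (ev M A False \<inter> ev M D True) \<le> condE M Y (ev M A False \<inter> ev M D False)"

definition monotone_in_D :: "'w measure \<Rightarrow> ('w \<Rightarrow> bool) \<Rightarrow> ('w \<Rightarrow> bool) \<Rightarrow> ('w \<Rightarrow> real) \<Rightarrow> bool" where
  "monotone_in_D M A D Y \<longleftrightarrow> nondecr_in_D M A D Y \<or> nonincr_in_D M A D Y"

text \<open>The factorization p(A,C,D,Y) = p(C) p(D|C) p(A|C) p(Y|A,C), stated on all
  events {A=x, C=y, D=z, Y \<in> B} with B Borel (conditional probabilities as ratios;
  all conditioning events have positive probability under the positivity assumption).\<close>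
definition factorizes :: "'w measure \<Rightarrow> ('w \<Rightarrow> bool) \<Rightarrow> ('w \<Rightarrow> bool) \<Rightarrow> ('w \<Rightarrow> bool) \<Rightarrow> ('w \<Rightarrow> real) \<Rightarrow> bool" where
  "factorizes M A C D Y \<longleftrightarrow>
     (\<forall>x y z B. B \<in> sets borel \<longrightarrow>
        measure M (ev M A x \<inter> ev M C y \<inter> ev M D z \<inter> (Y -` B \<inter> space M)) =
          measure M (ev M C y)
        * (measure M (ev M D z \<inter> ev M C y) / measure M (ev M C y))
        * (measure M (ev M A x \<inter> ev M C y) / measure M (ev M C y))
        * (measure M ((Y -` B \<inter> space M) \<inter> ev M A x \<inter> ev M C y) / measure M (ev M A x \<inter> ev M C y)))"

end

theory Submission
  imports Defs
begin

text \<open>Write q_y = P(d | C = y). By the factorization, E[Y | x, D] is a mixture of the stratum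
  means E[Y | x, C], and one computes RD_obs - RD_true = l_a t_a + l_abar t_abar and
  RD_crude - RD_true = t_a + t_abar with attenuation factors l_x in [0, 1], where t_x is, up to
  sign, the product of the stratum difference E[Y | x, c] - E[Y | x, cbar] with P(c | x) - P(c).
  If q_1 \<noteq> q_0, monotonicity in D forces the two stratum differences to have the same sign,
  while P(c | a) and P(c | abar) lie on opposite sides of P(c); hence t_a and t_abar have the same
  sign and RD_obs lies between the other two. If q_1 = q_0, then l_x = 1 and RD_obs = RD_crude.\<close>

lemma diff_convex_combination_mult_nonpos:
  fixes u1 u0 w :: real
  assumes "0 \<le> w" "w \<le> 1"
  shows "(u1 - (w*u1 + (1-w)*u0)) * (u0 - (w*u1 + (1-w)*u0)) \<le> 0"
proof -
  have "(u1 - (w*u1 + (1-w)*u0)) * (u0 - (w*u1 + (1-w)*u0)) = - (w*(1-w) * (u1-u0)^2)"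
    by algebra
  also have "\<dots> \<le> 0" using assms by simp
  finally show ?thesis .
qed

lemma between_of_same_sign_attenuation:
  fixes T Cr Ob t1 t0 l1 l0 :: real
  assumes "Ob - T = l1*t1 + l0*t0" "Cr - T = t1 + t0"
    and "0 \<le> l1" "l1 \<le> 1" "0 \<le> l0" "l0 \<le> 1" "0 \<le> t1*t0"
  shows "min T Cr \<le> Ob \<and> Ob \<le> max T Cr"
proof -
  consider "0 \<le> t1" "0 \<le> t0" | "t1 \<le> 0" "t0 \<le> 0"
    using \<open>0 \<le> t1*t0\<close> by (auto simp: zero_le_mult_iff)
  then show ?thesis
  proof cases
    case 1
    with assms have "0 \<le> l1*t1" "l1*t1 \<le> t1" "0 \<le> l0*t0" "l0*t0 \<le> t0"
      by (simp_all add: mult_left_le_one_le)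
    with assms(1,2) have "T \<le> Ob" "Ob \<le> Cr" by linarith+
    then show ?thesis by (auto simp: min_def max_def)
  next
    case 2
    with assms have "l1*t1 \<le> 0" "t1 \<le> l1*t1" "l0*t0 \<le> 0" "t0 \<le> l0*t0"
      by (simp_all add: mult_nonneg_nonpos mult_le_cancel_right1)
    with assms(1,2) have "Cr \<le> Ob" "Ob \<le> T" by linarith+
    then show ?thesis by (auto simp: min_def max_def)
  qed
qed

lemma same_sign_of_monotone_contrasts:
  fixes s k1 k0 d1 d0 E11 E10 E01 E00 :: real
  assumes "E11 - E10 = s * k1 * d1" "E01 - E00 = s * k0 * d0" "s \<noteq> 0" "0 < k1" "0 < k0"
    and "(E10 \<le> E11 \<and> E00 \<le> E01) \<or> (E11 \<le> E10 \<and> E01 \<le> E00)"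
  shows "0 \<le> d1 * d0"
proof -
  have "0 \<le> (E11 - E10) * (E01 - E00)"
    using assms(6) by (auto intro: mult_nonneg_nonneg mult_nonpos_nonpos)
  also have "\<dots> = (s^2 * (k1 * k0)) * (d1 * d0)" unfolding assms(1,2) by algebra
  finally have "0 \<le> (s^2 * (k1 * k0)) * (d1 * d0)" .
  moreover have "0 < s^2 * (k1 * k0)" using assms(3-5) by simp
  ultimately show ?thesis by (metis mult_le_cancel_left_pos mult_zero_right)
qed

lemma conditionals_straddle_marginal:
  fixes p :: "bool \<Rightarrow> bool \<Rightarrow> real"
  assumes p_pos: "\<And>x y. 0 < p x y"
    and p_sum: "p True True + p True False + p False True + p False False = 1"
  shows "(p True True / (p True True + p True False) - (p True True + p False True))
       * (p False True / (p False True + p False False) - (p True True + p False True)) \<le> 0"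
proof -
  define w where "w = p True True + p True False"
  have w_compl: "1 - w = p False True + p False False" unfolding w_def using p_sum by simp
  have "p True True + p False True
      = w * (p True True / (p True True + p True False))
        + (1 - w) * (p False True / (p False True + p False False))"
    unfolding w_compl unfolding w_def
    using p_pos[of True True] p_pos[of True False] p_pos[of False True] p_pos[of False False]
    by simp
  moreover have "0 \<le> w" "w \<le> 1" using w_compl p_pos unfolding w_def by (smt (verit))+
  ultimately show ?thesis using diff_convex_combination_mult_nonpos by metis
qed

text \<open>One treatment arm x: a = P(x, c), b = P(x, cbar), q1 = P(d | c), q0 = P(d | cbar),
  e1 = E[Y | x, c], e0 = E[Y | x, cbar]; then E1 = E[Y | x, d], E0 = E[Y | x, dbar], and
  \<pi> plays the role of P(c).\<close>
lemma proxy_adjustment_attenuates: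
  fixes a b q1 q0 e1 e0 \<pi> :: real
  assumes "0 < a" "0 < b" "0 < q1" "q1 < 1" "0 < q0" "q0 < 1"
  defines "E1 \<equiv> (a*q1*e1 + b*q0*e0) / (a*q1 + b*q0)"
    and "E0 \<equiv> (a*(1-q1)*e1 + b*(1-q0)*e0) / (a*(1-q1) + b*(1-q0))"
    and "Pd \<equiv> \<pi>*q1 + (1-\<pi>)*q0"
  obtains k where "0 < k" "(q1-q0)^2 * k \<le> 1" "E1 - E0 = (q1-q0) * k * (e1-e0)"
    "Pd*E1 + (1-Pd)*E0 - (\<pi>*e1 + (1-\<pi>)*e0) = (1 - (q1-q0)^2 * k) * (e1-e0) * (a/(a+b) - \<pi>)"
proof
  define D1 where "D1 = a*q1 + b*q0"
  define D0 where "D0 = a*(1-q1) + b*(1-q0)"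
  have D: "0 < D1" "0 < D0" unfolding D1_def D0_def using assms(1-6) by (auto intro: add_pos_pos)
  have ab: "0 < a + b" using assms(1,2) by simp
  define k where "k = a*b / (D1*D0)"
  show "0 < k" unfolding k_def using D assms(1,2) by simp
  have "D1*D0 - (q1-q0)^2 * (a*b) = (a+b) * (a*q1*(1-q1) + b*q0*(1-q0))"
    unfolding D1_def D0_def by algebra
  also have "\<dots> \<ge> 0" using assms(1-6) by simp
  finally show "(q1-q0)^2 * k \<le> 1" unfolding k_def using D by (simp add: field_simps)
  define W1 where "W1 = a*q1 / D1"
  define W0 where "W0 = a*(1-q1) / D0"
  have E: "E1 = e0 + (e1-e0)*W1" "E0 = e0 + (e1-e0)*W0"
    unfolding E1_def E0_def W1_def W0_def using D unfolding D1_def D0_def by (simp_all add: field_simps)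
  have W: "W1 - W0 = (q1-q0) * k"
    unfolding W1_def W0_def k_def using D unfolding D1_def D0_def by (simp add: field_simps)
  show "E1 - E0 = (q1-q0) * k * (e1-e0)" unfolding E W[symmetric] by algebra
  define u where "u = a/(a+b)"
  have "1 - u = b/(a+b)" unfolding u_def using ab by (simp add: field_simps)
  then have weight1: "u*q1 + (1-u)*q0 = D1/(a+b)"
    unfolding u_def D1_def by (simp add: add_divide_distrib)
  have weight0: "1 - D1/(a+b) = D0/(a+b)"
    unfolding D1_def D0_def using ab by (simp add: field_simps)
  have "D1*W1 = a*q1" "D0*W0 = a*(1-q1)" unfolding W1_def W0_def using D by simp_all
  then have "D1*W1 + D0*W0 = a" by algebra
  \<comment> \<open>averaging the posteriors W1 = P(c | x, d), W0 = P(c | x, dbar) over D returns P(c | x) = u\<close>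
  then have "(u*q1 + (1-u)*q0) * W1 + (1 - (u*q1 + (1-u)*q0)) * W0 = u"
    unfolding weight1 weight0 by (simp add: u_def add_divide_distrib[symmetric])
  moreover have "Pd*W1 + (1-Pd)*W0 - \<pi> - (1 - (q1-q0)*(W1-W0)) * (u - \<pi>)
      = (u*q1 + (1-u)*q0) * W1 + (1 - (u*q1 + (1-u)*q0)) * W0 - u"
    unfolding Pd_def by algebra
  ultimately have "Pd*W1 + (1-Pd)*W0 - \<pi> = (1 - (q1-q0)*(W1-W0)) * (u - \<pi>)" by simp
  then show "Pd*E1 + (1-Pd)*E0 - (\<pi>*e1 + (1-\<pi>)*e0) = (1 - (q1-q0)^2 * k) * (e1-e0) * (a/(a+b) - \<pi>)"
    unfolding E u_def W power2_eq_square by algebra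
qed

lemma rd_obs_between_closed_form:
  fixes p r e :: "bool \<Rightarrow> bool \<Rightarrow> real"
  assumes p_pos: "\<And>x y. 0 < p x y"
    and p_sum: "p True True + p True False + p False True + p False False = 1"
    and r_pos: "\<And>y z. 0 < r y z" and r_sum: "\<And>y. r y True + r y False = 1"
  defines "Pc y \<equiv> p True y + p False y"
  defines "Pd z \<equiv> Pc True * r True z + Pc False * r False z"
    and "Ecr x \<equiv> (p x True * e x True + p x False * e x False) / (p x True + p x False)"
    and "Eobs x z \<equiv> (p x True * r True z * e x True + p x False * r False z * e x False)
                     / (p x True * r True z + p x False * r False z)"
  defines "RDt \<equiv> e True True * Pc True + e True False * Pc False
                 - e False True * Pc True - e False False * Pc False"
    and "RDc \<equiv> Ecr True - Ecr False"
    and "RDo \<equiv> Eobs True True * Pd True + Eobs True False * Pd False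
                 - Eobs False True * Pd True - Eobs False False * Pd False"
  assumes mono: "(Eobs True False \<le> Eobs True True \<and> Eobs False False \<le> Eobs False True) \<or>
                 (Eobs True True \<le> Eobs True False \<and> Eobs False True \<le> Eobs False False)"
  shows "min RDt RDc \<le> RDo \<and> RDo \<le> max RDt RDc"
proof -
  define \<pi> where "\<pi> = Pc True"
  define q1 where "q1 = r True True"
  define q0 where "q0 = r False True"
  define u where "u x = p x True / (p x True + p x False)" for x
  define \<delta> where "\<delta> x = e x True - e x False" for x
  have Pc_False: "Pc False = 1 - \<pi>" unfolding \<pi>_def Pc_def using p_sum by simp
  have r_False: "r y False = 1 - r y True" for y using r_sum[of y] by simp
  have q: "0 < q1" "q1 < 1" "0 < q0" "q0 < 1"
    unfolding q1_def q0_def using r_pos[of _ False] r_pos[of _ True] r_False by auto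
  have Pd: "Pd True = \<pi>*q1 + (1-\<pi>)*q0" "Pd False = 1 - Pd True"
    unfolding Pd_def Pc_False r_False q1_def q0_def \<pi>_def by (simp_all add: algebra_simps)
  have "\<exists>k. 0 < k \<and> (q1-q0)^2 * k \<le> 1 \<and> Eobs x True - Eobs x False = (q1-q0) * k * \<delta> x \<and>
          Pd True * Eobs x True + (1 - Pd True) * Eobs x False - (\<pi> * e x True + (1-\<pi>) * e x False)
          = (1 - (q1-q0)^2 * k) * \<delta> x * (u x - \<pi>)" for x
    by (rule proxy_adjustment_attenuates[OF p_pos[of x True] p_pos[of x False] q,
          where ?e1.0 = "e x True" and ?e0.0 = "e x False" and \<pi> = \<pi>])
      (auto simp: Eobs_def r_False Pd u_def \<delta>_def q1_def q0_def)
  then obtain k where k_pos: "\<And>x. 0 < k x" and k_le: "\<And>x. (q1-q0)^2 * k x \<le> 1"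
    and obs_diff: "\<And>x. Eobs x True - Eobs x False = (q1-q0) * k x * \<delta> x"
    and obs_arm: "\<And>x. Pd True * Eobs x True + (1 - Pd True) * Eobs x False
                       - (\<pi> * e x True + (1-\<pi>) * e x False) = (1 - (q1-q0)^2 * k x) * \<delta> x * (u x - \<pi>)"
    by metis
  have crude_arm: "Ecr x - (\<pi> * e x True + (1-\<pi>) * e x False) = \<delta> x * (u x - \<pi>)" for x
    unfolding Ecr_def u_def \<delta>_def using p_pos[of x True] p_pos[of x False] by (simp add: field_simps)
  define t1 where "t1 = \<delta> True * (u True - \<pi>)"
  define t0 where "t0 = - (\<delta> False * (u False - \<pi>))"
  have obs_dev: "RDo - RDt = (1 - (q1-q0)^2 * k True) * t1 + (1 - (q1-q0)^2 * k False) * t0"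
    using obs_arm[of True] obs_arm[of False]
    unfolding RDo_def RDt_def Pc_False t1_def t0_def Pd(2) \<pi>_def[symmetric]
    by (simp add: algebra_simps)
  have crude_dev: "RDc - RDt = t1 + t0"
    using crude_arm[of True] crude_arm[of False]
    unfolding RDc_def RDt_def Pc_False t1_def t0_def \<pi>_def[symmetric]
    by (simp add: algebra_simps)
  show ?thesis
  proof (cases "q1 = q0")
    case True
    then have "RDo = RDc" using obs_dev crude_dev by simp
    then show ?thesis by simp
  next
    case False
    then have "0 \<le> \<delta> True * \<delta> False"
      using same_sign_of_monotone_contrasts[OF obs_diff obs_diff _ k_pos k_pos mono] by simp
    moreover have "(u True - \<pi>) * (u False - \<pi>) \<le> 0"
      unfolding u_def \<pi>_def Pc_def using conditionals_straddle_marginal[OF p_pos p_sum] .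
    moreover have "t1 * t0 = (\<delta> True * \<delta> False) * - ((u True - \<pi>) * (u False - \<pi>))"
      unfolding t1_def t0_def by algebra
    ultimately have "0 \<le> t1 * t0" by (simp add: mult_nonneg_nonpos)
    moreover have "0 \<le> (q1-q0)^2 * k x" for x using k_pos[of x] by simp
    ultimately show ?thesis
      using between_of_same_sign_attenuation[OF obs_dev crude_dev] k_le by simp
  qed
qed

lemma ev_in_sets: "X \<in> measurable M (count_space UNIV) \<Longrightarrow> ev M X v \<in> sets M"
proof -
  assume X: "X \<in> measurable M (count_space UNIV)"
  have "ev M X v = X -` {v} \<inter> space M" by (auto simp: ev_def)
  then show ?thesis using measurable_sets[OF X, of "{v}"] by simp
qed

lemma (in finite_measure) measure_split_ev:
  fixes X :: "'a \<Rightarrow> bool"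
  assumes S: "S \<in> sets M" and X: "X \<in> measurable M (count_space UNIV)"
  shows "measure M S = measure M (S \<inter> ev M X True) + measure M (S \<inter> ev M X False)"
proof -
  have parts: "S \<inter> ev M X v \<in> sets M" for v using S ev_in_sets[OF X] by auto
  have "S = (S \<inter> ev M X True) \<union> (S \<inter> ev M X False)"
    using sets.sets_into_space[OF S] by (auto simp: ev_def)
  moreover have "measure M ((S \<inter> ev M X True) \<union> (S \<inter> ev M X False))
      = measure M (S \<inter> ev M X True) + measure M (S \<inter> ev M X False)"
    by (intro finite_measure_Union parts) (auto simp: ev_def)
  ultimately show ?thesis by simp
qed

lemma integral_indicator_split_ev:
  fixes X :: "'w \<Rightarrow> bool" and Y :: "'w \<Rightarrow> real"
  assumes S: "S \<in> sets M" and X: "X \<in> measurable M (count_space UNIV)" and Y: "integrable M Y"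
  shows "(\<integral>\<omega>. indicator S \<omega> * Y \<omega> \<partial>M)
       = (\<integral>\<omega>. indicator (S \<inter> ev M X True) \<omega> * Y \<omega> \<partial>M)
       + (\<integral>\<omega>. indicator (S \<inter> ev M X False) \<omega> * Y \<omega> \<partial>M)"
proof -
  have "(\<lambda>\<omega>. indicator S \<omega> * Y \<omega>)
      = (\<lambda>\<omega>. indicator (S \<inter> ev M X True) \<omega> * Y \<omega> + indicator (S \<inter> ev M X False) \<omega> * Y \<omega>)"
    using sets.sets_into_space[OF S] by (auto simp: ev_def indicator_def fun_eq_iff)
  moreover have "S \<inter> ev M X v \<in> sets M" for v using S ev_in_sets[OF X] by auto
  ultimately show ?thesis
    using integrable_mult_indicator[OF _ Y] by simp
qed

lemma (in finite_measure) integral_indicator_eq_scaled: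
  fixes Y :: "'a \<Rightarrow> real"
  assumes S1: "S1 \<in> sets M" and S2: "S2 \<in> sets M"
    and Y: "Y \<in> borel_measurable M" and k: "0 \<le> k"
    and law: "\<And>B. B \<in> sets borel \<Longrightarrow>
      measure M (S1 \<inter> (Y -` B \<inter> space M)) = k * measure M (S2 \<inter> (Y -` B \<inter> space M))"
  shows "(\<integral>\<omega>. indicator S1 \<omega> * Y \<omega> \<partial>M) = k * (\<integral>\<omega>. indicator S2 \<omega> * Y \<omega> \<partial>M)"
proof -
  define N1 where "N1 = distr (density M (\<lambda>x. ennreal (indicator S1 x))) borel Y"
  define N2 where
    "N2 = density (distr (density M (\<lambda>x. ennreal (indicator S2 x))) borel Y) (\<lambda>_. ennreal k)"
  have Y_density: "Y \<in> measurable (density M g) borel" for g using Y by simp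
  have "N1 = N2"
  proof (rule measure_eqI)
    show "sets N1 = sets N2" by (simp add: N1_def N2_def)
    fix B assume "B \<in> sets N1"
    then have B: "B \<in> sets borel" by (simp add: N1_def)
    have pre: "Y -` B \<inter> space M \<in> sets M" using Y B by measurable
    have "emeasure N1 B = emeasure M (S1 \<inter> (Y -` B \<inter> space M))"
      unfolding N1_def using B Y_density pre S1
      by (simp add: emeasure_distr ennreal_indicator emeasure_restricted)
    also have "\<dots> = ennreal k * emeasure M (S2 \<inter> (Y -` B \<inter> space M))"
      using law[OF B] k by (simp add: emeasure_eq_measure ennreal_mult)
    also have "\<dots> = emeasure N2 B"
      unfolding N2_def using B Y_density pre S2
      by (simp add: emeasure_density_const emeasure_distr ennreal_indicator emeasure_restricted)
    finally show "emeasure N1 B = emeasure N2 B" .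
  qed
  have "(\<integral>\<omega>. indicator S1 \<omega> * Y \<omega> \<partial>M) = integral\<^sup>L N1 (\<lambda>x. x)"
    unfolding N1_def using Y_density S1 Y by (simp add: integral_distr integral_density)
  also have "\<dots> = integral\<^sup>L N2 (\<lambda>x. x)" using \<open>N1 = N2\<close> by simp
  also have "\<dots> = k * (\<integral>\<omega>. indicator S2 \<omega> * Y \<omega> \<partial>M)"
    unfolding N2_def using Y_density S2 Y k by (simp add: integral_distr integral_density)
  finally show ?thesis .
qed

locale proxy_model = prob_space M for M :: "'w measure" +
  fixes A C D :: "'w \<Rightarrow> bool" and Y :: "'w \<Rightarrow> real"
  assumes A_measurable: "A \<in> measurable M (count_space UNIV)"
    and C_measurable: "C \<in> measurable M (count_space UNIV)"
    and D_measurable: "D \<in> measurable M (count_space UNIV)"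
    and integrable_Y: "integrable M Y"
    and factorizes: "factorizes M A C D Y"
    and cell_pos: "\<And>x y z. 0 < measure M (ev M A x \<inter> ev M C y \<inter> ev M D z)"
begin

abbreviation P_AC :: "bool \<Rightarrow> bool \<Rightarrow> real" where
  "P_AC x y \<equiv> measure M (ev M A x \<inter> ev M C y)"

abbreviation E_AC :: "bool \<Rightarrow> bool \<Rightarrow> real" where
  "E_AC x y \<equiv> condE M Y (ev M A x \<inter> ev M C y)"

definition cond_D :: "bool \<Rightarrow> bool \<Rightarrow> real" where
  "cond_D y z = measure M (ev M D z \<inter> ev M C y) / measure M (ev M C y)"

lemma ev_events [simp]: "ev M A x \<in> events" "ev M C y \<in> events" "ev M D z \<in> events"
  using A_measurable C_measurable D_measurable by (simp_all add: ev_in_sets)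

lemma P_AC_pos: "0 < P_AC x y"
  using measure_split_ev[OF _ D_measurable, of "ev M A x \<inter> ev M C y"] cell_pos[of x y]
    cell_pos[of x y False] by (simp add: sets.Int add_pos_pos)

lemma measure_C_eq: "measure M (ev M C y) = P_AC True y + P_AC False y"
  using measure_split_ev[OF _ A_measurable, of "ev M C y"] by (simp add: Int_ac)

lemma measure_C_pos: "0 < measure M (ev M C y)"
  unfolding measure_C_eq using P_AC_pos by (simp add: add_pos_pos)

lemma P_AC_sum: "P_AC True True + P_AC True False + P_AC False True + P_AC False False = 1"
proof -
  have "measure M (ev M C True) + measure M (ev M C False) = 1"
    using measure_split_ev[OF sets.top C_measurable] prob_space
    by (simp add: Int_absorb1 ev_def)
  then show ?thesis unfolding measure_C_eq by simp
qed

lemma cond_D_pos: "0 < cond_D y z"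
proof -
  have "0 < measure M (ev M D z \<inter> ev M C y)"
    using measure_split_ev[OF _ A_measurable, of "ev M D z \<inter> ev M C y"] cell_pos[of True y z]
      cell_pos[of False y z] by (simp add: sets.Int Int_ac add_pos_pos)
  then show ?thesis unfolding cond_D_def using measure_C_pos by simp
qed

lemma cond_D_sum: "cond_D y True + cond_D y False = 1"
  using measure_split_ev[OF _ D_measurable, of "ev M C y"] measure_C_pos[of y]
  unfolding cond_D_def by (simp add: Int_ac add_divide_distrib[symmetric])

lemma measure_D_eq:
  "measure M (ev M D z)
   = measure M (ev M C True) * cond_D True z + measure M (ev M C False) * cond_D False z"
  using measure_split_ev[OF _ C_measurable, of "ev M D z"] measure_C_pos[of True] measure_C_pos[of False]
  unfolding cond_D_def by simp

lemma cell_restricted_law: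
  assumes "B \<in> sets borel"
  shows "measure M (ev M A x \<inter> ev M C y \<inter> ev M D z \<inter> (Y -` B \<inter> space M))
       = cond_D y z * measure M (ev M A x \<inter> ev M C y \<inter> (Y -` B \<inter> space M))"
proof -
  have "(Y -` B \<inter> space M) \<inter> ev M A x \<inter> ev M C y = ev M A x \<inter> ev M C y \<inter> (Y -` B \<inter> space M)"
    by blast
  then show ?thesis
    using factorizes assms measure_C_pos[of y] P_AC_pos[of x y]
    unfolding factorizes_def cond_D_def by (simp add: field_simps)
qed

lemma measure_cell: "measure M (ev M A x \<inter> ev M C y \<inter> ev M D z) = cond_D y z * P_AC x y"
  using cell_restricted_law[of UNIV x y z] by (simp add: sets.Int)

lemma integral_cell:
  "(\<integral>\<omega>. indicator (ev M A x \<inter> ev M C y \<inter> ev M D z) \<omega> * Y \<omega> \<partial>M)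
   = cond_D y z * (\<integral>\<omega>. indicator (ev M A x \<inter> ev M C y) \<omega> * Y \<omega> \<partial>M)"
  using cell_restricted_law cond_D_pos[THEN less_imp_le] borel_measurable_integrable[OF integrable_Y]
  by (intro integral_indicator_eq_scaled) (simp_all add: sets.Int)

lemma integral_AC: "(\<integral>\<omega>. indicator (ev M A x \<inter> ev M C y) \<omega> * Y \<omega> \<partial>M) = P_AC x y * E_AC x y"
  using P_AC_pos[of x y] unfolding condE_def by simp

lemma condE_A_eq:
  "condE M Y (ev M A x) = (P_AC x True * E_AC x True + P_AC x False * E_AC x False)
                          / (P_AC x True + P_AC x False)"
  using integral_indicator_split_ev[OF _ C_measurable integrable_Y, of "ev M A x"]
    measure_split_ev[OF _ C_measurable, of "ev M A x"]
  unfolding condE_def[of M Y "ev M A x"] integral_AC by simp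

lemma condE_AD_eq:
  "condE M Y (ev M A x \<inter> ev M D z)
   = (P_AC x True * cond_D True z * E_AC x True + P_AC x False * cond_D False z * E_AC x False)
     / (P_AC x True * cond_D True z + P_AC x False * cond_D False z)"
proof -
  have cell: "ev M A x \<inter> ev M D z \<inter> ev M C y = ev M A x \<inter> ev M C y \<inter> ev M D z" for y
    by blast
  have "(\<integral>\<omega>. indicator (ev M A x \<inter> ev M D z) \<omega> * Y \<omega> \<partial>M)
      = P_AC x True * cond_D True z * E_AC x True + P_AC x False * cond_D False z * E_AC x False"
    using integral_indicator_split_ev[OF _ C_measurable integrable_Y, of "ev M A x \<inter> ev M D z"]
    unfolding cell integral_cell integral_AC by (simp add: sets.Int)
  moreover have "measure M (ev M A x \<inter> ev M D z)
      = P_AC x True * cond_D True z + P_AC x False * cond_D False z"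
    using measure_split_ev[OF _ C_measurable, of "ev M A x \<inter> ev M D z"]
    unfolding cell measure_cell by (simp add: sets.Int)
  ultimately show ?thesis unfolding condE_def by simp
qed

end

theorem corollary1:
  fixes M :: "'w measure" and A C D :: "'w \<Rightarrow> bool" and Y :: "'w \<Rightarrow> real"
  assumes "prob_space M"
    and "A \<in> measurable M (count_space UNIV)"
    and "C \<in> measurable M (count_space UNIV)"
    and "D \<in> measurable M (count_space UNIV)"
    and "Y \<in> borel_measurable M"
    and "integrable M Y"
    and "factorizes M A C D Y"
    and "\<not> prob_space.indep_var M (count_space UNIV) C (count_space UNIV) D"
    and "\<And>x y z. measure M (ev M A x \<inter> ev M C y \<inter> ev M D z) > 0"
    and "monotone_in_D M A D Y"
  shows "min (RD_true M A C Y) (RD_crude M A Y) \<le> RD_obs M A D Y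
       \<and> RD_obs M A D Y \<le> max (RD_true M A C Y) (RD_crude M A Y)"
proof -
  interpret proxy_model M A C D Y
    using assms(1-4,6,7,9) by (simp add: proxy_model_def proxy_model_axioms_def)
  show ?thesis
    using assms(10)
    unfolding monotone_in_D_def nondecr_in_D_def nonincr_in_D_def
      RD_true_def RD_crude_def RD_obs_def measure_D_eq measure_C_eq condE_A_eq condE_AD_eq
    by (rule rd_obs_between_closed_form[OF P_AC_pos P_AC_sum cond_D_pos cond_D_sum])
qed

end
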